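(* Let $w\ge5$ and $n$ be integers, and let $B\subseteq[n-1]$ be a set with largest element $b$ (with $b=0$ if $B$ is empty). If $n\ge w(2b+w^2)$, then there exists a $B$-free $(n,w-1)$ modular Golomb ruler.
   Context: An $(n,w)$ modular Golomb ruler is a set of $w$ elements $\{a_1,\dots,a_w\}\subseteq\mathbb Z_n$ such that all differences $a_i-a_j$ ($1\le i\ne j\le w$), computed in $\mathbb Z_n$, are nonzero and pairwise distinct; this set of differences is its set of differences. For a finite set $B\subseteq[n-1]=\{1,\dots,n-1\}$, a modular Golomb ruler is $B$-free if no element of $B$, viewed as an element of $\mathbb Z_n$, lies in its set of differences. *)

theory Defs
  imports Main
begin

text \<open>Elements of Z_n are represented by integers in {0..<n}; subtraction in Z_n
is (x - y) mod n.\<close>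

definition offdiag :: "int set \<Rightarrow> (int \<times> int) set" where
  "offdiag A = {(a, a'). a \<in> A \<and> a' \<in> A \<and> a \<noteq> a'}"

definition diff_set :: "int \<Rightarrow> int set \<Rightarrow> int set" where
  "diff_set n A = (\<lambda>(a, a'). (a - a') mod n) ` offdiag A"

definition modular_golomb_ruler :: "int \<Rightarrow> nat \<Rightarrow> int set \<Rightarrow> bool" where
  "modular_golomb_ruler n w A \<longleftrightarrow>
     A \<subseteq> {0..<n} \<and> finite A \<and> card A = w \<and>
     (\<forall>p \<in> offdiag A. (fst p - snd p) mod n \<noteq> 0) \<and>
     inj_on (\<lambda>(a, a'). (a - a') mod n) (offdiag A)"

definition B_free :: "int \<Rightarrow> int set \<Rightarrow> int set \<Rightarrow> bool" where
  "B_free n B A \<longleftrightarrow> (\<forall>x \<in> B. x mod n \<notin> diff_set n A)"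

end

theory Submission
  imports Defs
begin

text \<open>A greedy construction. If A \<subseteq> Z_n has k elements, pairwise distinct differences and no
difference in B, then A \<union> {x} keeps both properties unless x \<equiv> a + c - c', 2x \<equiv> a + a'
or x \<equiv> a \<plusminus> \<beta> for some a, a', c, c' \<in> A and \<beta> \<in> B. Since 2x \<equiv> t has at most two
solutions in Z_n, at most k^3 + 2k^2 + 2k|B| residues are excluded, and |B| \<le> b makes this
less than w^3 + 2wb \<le> n as long as k \<le> w - 2.\<close>

abbreviation diff_mod :: "int \<Rightarrow> int \<times> int \<Rightarrow> int" where
  "diff_mod n \<equiv> \<lambda>(a, a'). (a - a') mod n"

lemma offdiag_insert:
  assumes "x \<notin> A"
  shows "offdiag (insert x A) = offdiag A \<union> ({x} \<times> A \<union> A \<times> {x})"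
  using assms by (auto simp: offdiag_def)

lemma diff_mod_offdiag_nonzero:
  assumes "A \<subseteq> {0..<n}" "p \<in> offdiag A"
  shows "diff_mod n p \<noteq> 0"
proof -
  obtain a a' where "p = (a, a')" "a \<in> A" "a' \<in> A" "a \<noteq> a'"
    using assms(2) by (auto simp: offdiag_def)
  moreover from this have "a mod n \<noteq> a' mod n"
    using assms(1) by (auto simp: subset_iff)
  ultimately show ?thesis by (simp add: mod_eq_dvd_iff mod_eq_0_iff_dvd)
qed

lemma modular_golomb_ruler_iff:
  "modular_golomb_ruler n w A \<longleftrightarrow>
     A \<subseteq> {0..<n} \<and> finite A \<and> card A = w \<and> inj_on (diff_mod n) (offdiag A)"
  using diff_mod_offdiag_nonzero[of A n] unfolding modular_golomb_ruler_def
  by (intro iffI) (simp_all add: split_beta)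

lemma inj_on_diff_mod_insert:
  fixes n x :: int
  assumes A: "A \<subseteq> {0..<n}" and "x \<notin> A"
    and inj: "inj_on (diff_mod n) (offdiag A)"
    and avoids_sum_diff: "\<forall>a\<in>A. \<forall>c\<in>A. \<forall>c'\<in>A. x mod n \<noteq> (a + c - c') mod n"
    and avoids_half_sum: "\<forall>a\<in>A. \<forall>a'\<in>A. (2 * x) mod n \<noteq> (a + a') mod n"
  shows "inj_on (diff_mod n) (offdiag (insert x A))"
proof -
  have eq_if_dvd: "a = a'" if "a \<in> A" "a' \<in> A" "n dvd a - a'" for a a'
    using A that by (metis atLeastLessThan_iff mod_eq_dvd_iff mod_pos_pos_trivial subsetD)
  have "(x - a) mod n \<noteq> (a' - x) mod n" if "a \<in> A" "a' \<in> A" for a a'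
  proof
    assume "(x - a) mod n = (a' - x) mod n"
    from mod_add_cong[OF this, of "x + a" "x + a"] have "(2 * x) mod n = (a + a') mod n"
      by (simp add: algebra_simps)
    with avoids_half_sum that show False by blast
  qed
  moreover have "inj_on (diff_mod n) ({x} \<times> A)" "inj_on (diff_mod n) (A \<times> {x})"
    by (auto simp: inj_on_def mod_eq_dvd_iff dest: eq_if_dvd)
  ultimately have new: "inj_on (diff_mod n) ({x} \<times> A \<union> A \<times> {x})"
    by (auto simp: inj_on_Un)
  have "(x - a) mod n \<noteq> (c - c') mod n" if "a \<in> A" "c \<in> A" "c' \<in> A" for a c c'
  proof
    assume "(x - a) mod n = (c - c') mod n"
    from mod_add_cong[OF this, of a a] have "x mod n = (a + c - c') mod n"
      by (simp add: algebra_simps)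
    with avoids_sum_diff that show False by blast
  qed
  moreover have "(a - x) mod n \<noteq> (c - c') mod n" if "a \<in> A" "c \<in> A" "c' \<in> A" for a c c'
  proof
    assume "(a - x) mod n = (c - c') mod n"
    from mod_diff_cong[OF refl this, of a] have "x mod n = (a + c' - c) mod n"
      by (simp add: algebra_simps)
    with avoids_sum_diff that show False by blast
  qed
  ultimately have "diff_mod n ` offdiag A \<inter> diff_mod n ` ({x} \<times> A \<union> A \<times> {x}) = {}"
    by (fastforce simp: offdiag_def)
  with inj new show ?thesis
    unfolding offdiag_insert[OF \<open>x \<notin> A\<close>] inj_on_Un by blast
qed

lemma B_free_insert:
  fixes n x :: int
  assumes "x \<notin> A" and free: "B_free n B A"
    and avoids_B_shift: "\<forall>a\<in>A. \<forall>\<beta>\<in>B. x mod n \<noteq> (a + \<beta>) mod n \<and> x mod n \<noteq> (a - \<beta>) mod n"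
  shows "B_free n B (insert x A)"
proof -
  have "\<beta> mod n \<noteq> (x - a) mod n" if "a \<in> A" "\<beta> \<in> B" for a \<beta>
  proof
    assume "\<beta> mod n = (x - a) mod n"
    from mod_add_cong[OF this, of a a] have "x mod n = (a + \<beta>) mod n"
      by (simp add: algebra_simps)
    with avoids_B_shift that show False by blast
  qed
  moreover have "\<beta> mod n \<noteq> (a - x) mod n" if "a \<in> A" "\<beta> \<in> B" for a \<beta>
  proof
    assume "\<beta> mod n = (a - x) mod n"
    from mod_diff_cong[OF refl this, of a] have "x mod n = (a - \<beta>) mod n"
      by (simp add: algebra_simps)
    with avoids_B_shift that show False by blast
  qed
  ultimately show ?thesis
    using free unfolding B_free_def diff_set_def offdiag_insert[OF \<open>x \<notin> A\<close>]
    by (auto simp: image_iff)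
qed

lemma double_mod_cases:
  fixes y n :: int
  assumes "y \<in> {0..<n}"
  shows "2 * y = (2 * y) mod n \<or> 2 * y = (2 * y) mod n + n"
proof (cases "2 * y < n")
  case True
  then show ?thesis using assms by simp
next
  case False
  then have "(2 * y - n) mod n = 2 * y - n"
    using assms by (intro mod_pos_pos_trivial) auto
  then show ?thesis by simp
qed

lemma card_double_mod_eq_le:
  fixes n c :: int
  shows "card {y \<in> {0..<n}. (2 * y) mod n = c} \<le> 2"
proof -
  have "{y \<in> {0..<n}. (2 * y) mod n = c} \<subseteq> {c div 2, (c + n) div 2}"
    using double_mod_cases by fastforce
  then have "card {y \<in> {0..<n}. (2 * y) mod n = c} \<le> card {c div 2, (c + n) div 2}"
    by (intro card_mono) simp_all
  also have "\<dots> \<le> 2"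
    by (simp add: card_insert_if)
  finally show ?thesis .
qed

definition forbidden_residues :: "int \<Rightarrow> int set \<Rightarrow> int set \<Rightarrow> int set" where
  "forbidden_residues n B A =
     (\<lambda>(a, c, c'). (a + c - c') mod n) ` (A \<times> A \<times> A) \<union>
     (\<Union>(a, a') \<in> A \<times> A. {y \<in> {0..<n}. (2 * y) mod n = (a + a') mod n}) \<union>
     (\<lambda>(a, \<beta>). (a + \<beta>) mod n) ` (A \<times> (B \<union> uminus ` B))"

lemma finite_forbidden_residues:
  "finite A \<Longrightarrow> finite B \<Longrightarrow> finite (forbidden_residues n B A)"
  unfolding forbidden_residues_def by (auto intro: finite_subset[of _ "{0..<n}"])

lemma card_forbidden_residues_le:
  assumes "finite A" "finite B"
  shows "card (forbidden_residues n B A) \<le> card A ^ 3 + 2 * card A ^ 2 + 2 * card A * card B"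
proof -
  let ?k = "card A"
  have "card ((\<lambda>(a, c, c'). (a + c - c') mod n) ` (A \<times> A \<times> A)) \<le> ?k ^ 3"
    using card_image_le[of "A \<times> A \<times> A"] assms
    by (simp add: card_cartesian_product power3_eq_cube mult.assoc)
  moreover have "card (\<Union>(a, a') \<in> A \<times> A. {y \<in> {0..<n}. (2 * y) mod n = (a + a') mod n})
      \<le> 2 * ?k ^ 2"
  proof -
    have "card (\<Union>(a, a') \<in> A \<times> A. {y \<in> {0..<n}. (2 * y) mod n = (a + a') mod n})
        \<le> (\<Sum>p \<in> A \<times> A. 2)"
      using card_double_mod_eq_le
      by (intro order_trans[OF card_UN_le sum_mono]) (auto simp: assms)
    then show ?thesis
      by (simp add: card_cartesian_product power2_eq_square)
  qed
  moreover have "card ((\<lambda>(a, \<beta>). (a + \<beta>) mod n) ` (A \<times> (B \<union> uminus ` B)))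
      \<le> 2 * ?k * card B"
  proof -
    have "card (B \<union> uminus ` B) \<le> 2 * card B"
      using card_Un_le[of B "uminus ` B"] card_image_le[OF assms(2), of uminus] by simp
    have "card ((\<lambda>(a, \<beta>). (a + \<beta>) mod n) ` (A \<times> (B \<union> uminus ` B)))
        \<le> card (A \<times> (B \<union> uminus ` B))"
      using assms by (intro card_image_le) simp
    also have "\<dots> \<le> ?k * (2 * card B)"
      using \<open>card (B \<union> uminus ` B) \<le> 2 * card B\<close> by (simp add: card_cartesian_product)
    finally show ?thesis by simp
  qed
  ultimately show ?thesis
    unfolding forbidden_residues_def
    by (meson card_Un_le add_le_mono order_trans)
qed

lemma modular_golomb_ruler_insert:
  fixes n x :: int
  assumes ruler: "modular_golomb_ruler n k A" and free: "B_free n B A"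
    and x: "x \<in> {0..<n}" "x \<notin> forbidden_residues n B A"
  shows "modular_golomb_ruler n (Suc k) (insert x A) \<and> B_free n B (insert x A)"
proof -
  from ruler have A: "A \<subseteq> {0..<n}" "finite A" "card A = k" "inj_on (diff_mod n) (offdiag A)"
    by (simp_all add: modular_golomb_ruler_iff)
  have x_mod: "x mod n = x"
    using x(1) by simp
  have "(a + c - c') mod n \<in> forbidden_residues n B A" if "a \<in> A" "c \<in> A" "c' \<in> A" for a c c'
    unfolding forbidden_residues_def using that by (intro UnI1 rev_image_eqI[of "(a, c, c')"]) auto
  with x(2) x_mod have avoids_sum_diff: "\<forall>a\<in>A. \<forall>c\<in>A. \<forall>c'\<in>A. x mod n \<noteq> (a + c - c') mod n"
    by metis
  have avoids_half_sum: "\<forall>a\<in>A. \<forall>a'\<in>A. (2 * x) mod n \<noteq> (a + a') mod n"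
    using x unfolding forbidden_residues_def by blast
  have "(a + \<beta>) mod n \<in> forbidden_residues n B A" if "a \<in> A" "\<beta> \<in> B \<union> uminus ` B" for a \<beta>
    unfolding forbidden_residues_def using that by (intro UnI2 rev_image_eqI[of "(a, \<beta>)"]) auto
  with x(2) x_mod
  have avoids_B_shift: "\<forall>a\<in>A. \<forall>\<beta>\<in>B. x mod n \<noteq> (a + \<beta>) mod n \<and> x mod n \<noteq> (a - \<beta>) mod n"
    by (metis UnI1 UnI2 diff_conv_add_uminus image_eqI)
  have "x \<notin> A"
  proof
    assume "x \<in> A"
    with avoids_sum_diff have "x mod n \<noteq> (x + x - x) mod n" by blast
    then show False by simp
  qed
  with A avoids_sum_diff avoids_half_sum avoids_B_shift free x(1) show ?thesis
    by (simp add: modular_golomb_ruler_iff inj_on_diff_mod_insert B_free_insert)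
qed

lemma ex_residue_notin:
  fixes n :: int
  assumes "finite F" "int (card F) < n"
  obtains x where "x \<in> {0..<n}" "x \<notin> F"
proof -
  have "\<not> {0..<n} \<subseteq> F"
  proof
    assume "{0..<n} \<subseteq> F"
    then have "card {0..<n} \<le> card F"
      by (rule card_mono[OF assms(1)])
    then have "nat n \<le> card F"
      by simp
    with assms(2) show False by linarith
  qed
  then show ?thesis using that by blast
qed

lemma greedy_B_free_modular_golomb_ruler:
  fixes n :: int
  assumes "finite B" and "\<forall>j<k. int j ^ 3 + 2 * int j ^ 2 + 2 * int j * int (card B) < n"
  shows "\<exists>A. modular_golomb_ruler n k A \<and> B_free n B A"
  using assms(2)
proof (induction k)
  case 0
  have "modular_golomb_ruler n 0 {}" "B_free n B {}"
    by (simp_all add: modular_golomb_ruler_iff B_free_def diff_set_def offdiag_def)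
  then show ?case by blast
next
  case (Suc k)
  then obtain A where A: "modular_golomb_ruler n k A" "B_free n B A"
    using less_SucI by blast
  have "finite A" "card A = k"
    using A(1) by (simp_all add: modular_golomb_ruler_iff)
  then have "card (forbidden_residues n B A) \<le> k ^ 3 + 2 * k ^ 2 + 2 * k * card B"
    using card_forbidden_residues_le[OF _ \<open>finite B\<close>] by blast
  then have "int (card (forbidden_residues n B A)) \<le> int (k ^ 3 + 2 * k ^ 2 + 2 * k * card B)"
    by (simp only: of_nat_le_iff)
  also have "\<dots> < n"
    using Suc.prems[rule_format, of k] by simp
  finally obtain x where x: "x \<in> {0..<n}" "x \<notin> forbidden_residues n B A"
    using ex_residue_notin finite_forbidden_residues[OF \<open>finite A\<close> \<open>finite B\<close>] by blast
  then show ?case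
    using modular_golomb_ruler_insert[OF A x] by blast
qed

lemma cubic_bound:
  fixes j c w b n :: int
  assumes "0 \<le> j" "j + 2 \<le> w" "0 \<le> c" "c \<le> b" "w * (2 * b + w ^ 2) \<le> n"
  shows "j ^ 3 + 2 * j ^ 2 + 2 * j * c < n"
proof -
  have "j ^ 2 * (j + 2) \<le> j ^ 2 * w"
    using assms(2) by (intro mult_left_mono) auto
  also have "\<dots> < w ^ 2 * w"
    using assms(1,2) by (intro mult_strict_right_mono power_strict_mono) auto
  finally have "j ^ 3 + 2 * j ^ 2 < w ^ 3"
    by (simp add: power2_eq_square power3_eq_cube algebra_simps)
  moreover have "j * c \<le> w * b"
    using assms by (intro mult_mono) auto
  ultimately have "j ^ 3 + 2 * j ^ 2 + 2 * j * c < w ^ 3 + 2 * w * b"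
    by linarith
  also have "\<dots> \<le> n"
    using assms(5) by (simp add: power2_eq_square power3_eq_cube algebra_simps)
  finally show ?thesis .
qed

lemma int_card_le_Max:
  fixes B :: "int set"
  assumes "finite B" "B \<subseteq> {1..}"
  shows "int (card B) \<le> (if B = {} then 0 else Max B)"
proof (cases "B = {}")
  case False
  then have "B \<subseteq> {1..Max B}"
    using assms by auto
  then have "card B \<le> card {1..Max B}"
    by (intro card_mono) auto
  moreover have "1 \<le> Max B"
    using False assms Max_in by fastforce
  ultimately show ?thesis
    using False by simp
qed simp

theorem lemma2:
  fixes w :: nat and n b :: int and B :: "int set"
  assumes "w \<ge> 5"
    and "B \<subseteq> {1..n-1}"
    and "b = (if B = {} then 0 else Max B)"
    and "n \<ge> int w * (2 * b + int w ^ 2)"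
  shows "\<exists>A. modular_golomb_ruler n (w - 1) A \<and> B_free n B A"
proof -
  have "finite B"
    using assms(2) finite_subset by blast
  moreover have "int (card B) \<le> b"
    using int_card_le_Max[OF \<open>finite B\<close>] assms(2,3) by fastforce
  then have "\<forall>j<w - 1. int j ^ 3 + 2 * int j ^ 2 + 2 * int j * int (card B) < n"
    using cubic_bound[of _ "int w" "int (card B)" b n] assms(4) by force
  ultimately show ?thesis
    by (rule greedy_B_free_modular_golomb_ruler)
qed

end
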